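(* Let $n\geq 1$ and let $H$ be an irreducible subgroup of $SL(n,\mathbb{C})$. For every subgroup $A$ of $Z_n(H)$ one has $Z_{PSL(n,\mathbb{C})}\big(Z_{PSL(n,\mathbb{C})}(A)\big)=A$. In particular, every subgroup of $Z_n(H)$ is itself the centralizer in $PSL(n,\mathbb{C})$ of an irreducible subgroup of $PSL(n,\mathbb{C})$.
   Context: Let $\xi=e^{2\pi i/n}$ and $\pi_n:SL(n,\mathbb{C})\to PSL(n,\mathbb{C})=SL(n,\mathbb{C})/\langle\xi I_n\rangle$ the quotient map. A subgroup $H\le SL(n,\mathbb{C})$ is irreducible if no nonzero proper subspace of $\mathbb{C}^n$ is $H$-invariant; a subgroup of $PSL(n,\mathbb{C})$ is irreducible if its preimage under $\pi_n$ is. $Z_G(S)$ denotes the centralizer of $S$ in $G$, and $Z_n(H)=Z_{PSL(n,\mathbb{C})}(\pi_n(H))$. *)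

theory Defs
  imports "HOL-Analysis.Analysis"
begin

text \<open>n = CARD('n); matrices are complex^'n^'n.\<close>

definition SL :: "(complex^'n^'n) set" where
  "SL = {A. det A = 1}"

definition sl_subgroup :: "(complex^'n^'n) set \<Rightarrow> bool" where
  "sl_subgroup H \<longleftrightarrow> H \<subseteq> SL \<and> mat 1 \<in> H \<and>
     (\<forall>a\<in>H. \<forall>b\<in>H. a ** b \<in> H) \<and> (\<forall>a\<in>H. matrix_inv a \<in> H)"

definition xi :: "'n::finite itself \<Rightarrow> complex" where
  "xi _ = cis (2 * pi / real CARD('n))"

text \<open>The quotient map pi_n: a matrix g is sent to its coset modulo the centre generated by xi I.\<close>
definition pi_n :: "complex^'n^'n \<Rightarrow> (complex^'n^'n) set" where
  "pi_n g = {mat ((xi TYPE('n)) ^ k) ** g | k::nat. True}"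

definition PSL :: "((complex^'n^'n) set) set" where
  "PSL = pi_n ` SL"

definition psl_mult :: "(complex^'n^'n) set \<Rightarrow> (complex^'n^'n) set \<Rightarrow> (complex^'n^'n) set" where
  "psl_mult X Y = {a ** b | a b. a \<in> X \<and> b \<in> Y}"

definition psl_inv :: "(complex^'n^'n) set \<Rightarrow> (complex^'n^'n) set" where
  "psl_inv X = matrix_inv ` X"

definition psl_subgroup :: "((complex^'n^'n) set) set \<Rightarrow> bool" where
  "psl_subgroup A \<longleftrightarrow> A \<subseteq> PSL \<and> pi_n (mat 1) \<in> A \<and>
     (\<forall>X\<in>A. \<forall>Y\<in>A. psl_mult X Y \<in> A) \<and> (\<forall>X\<in>A. psl_inv X \<in> A)"

definition psl_centralizer :: "((complex^'n^'n) set) set \<Rightarrow> ((complex^'n^'n) set) set" where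
  "psl_centralizer S = {X \<in> PSL. \<forall>Y\<in>S. psl_mult X Y = psl_mult Y X}"

definition Zn :: "(complex^'n^'n) set \<Rightarrow> ((complex^'n^'n) set) set" where
  "Zn H = psl_centralizer (pi_n ` H)"

definition irreducible_sl :: "(complex^'n^'n) set \<Rightarrow> bool" where
  "irreducible_sl H \<longleftrightarrow>
     (\<forall>W :: (complex^'n) set. vec.subspace W \<and> W \<noteq> {0} \<and> W \<noteq> UNIV \<longrightarrow>
        \<not> (\<forall>h\<in>H. (\<lambda>v. h *v v) ` W \<subseteq> W))"

definition irreducible_psl :: "((complex^'n^'n) set) set \<Rightarrow> bool" where
  "irreducible_psl A \<longleftrightarrow> irreducible_sl {g \<in> SL. pi_n g \<in> A}"

end

theory Submission
  imports Defs "HOL-Computational_Algebra.Fundamental_Theorem_Algebra"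
begin

(*
  Let A' be the preimage of A in SL(n,C). As A centralizes the image of H, every a in A' satisfies
  a h = \<chi>\<^sub>a(h) h a for h in H and scalars \<chi>\<^sub>a(h). By Schur's lemma a is determined by
  \<chi>\<^sub>a up to an n-th root of unity, and by Dedekind's argument matrices with distinct factors
  \<chi> are linearly independent, so A' is finite.

  Let g in SL(n,C) represent an element of the bicentralizer of A. If m commutes with A', a
  rescaling of m + t I into SL(n,C) represents an element of the centralizer of A, so g commutes
  with m + t I up to a scalar; using two values of t shows that g commutes with m. Taking for m the
  averages of the elementary matrices under conjugation by A' gives a linear relation between the
  matrices a^-1 g and a^-1 (a in A'). Its component with factor \<chi>\<^sub>g is a
  positive multiple of g unless g is a scalar multiple of some a^-1, i.e. unless g represents an
  element of A. Finally the centralizer of A contains the image of H, hence is irreducible.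
*)

definition smul :: "complex \<Rightarrow> complex^'n^'n \<Rightarrow> complex^'n^'n" where
  "smul c M = (\<chi> i j. c * M$i$j)"

lemma smul_nth [simp]: "smul c M $ i $ j = c * M$i$j"
  by (simp add: smul_def)

lemma smul_smul [simp]: "smul c (smul d M) = smul (c * d) M"
  by (simp add: vec_eq_iff mult.assoc)

lemma smul_one [simp]: "smul 1 M = M"
  by (simp add: vec_eq_iff)

lemma smul_zero [simp]: "smul c 0 = 0"
  by (simp add: vec_eq_iff)

lemma smul_eq_0_iff: "smul c M = 0 \<longleftrightarrow> c = 0 \<or> M = 0"
  by (auto simp: vec_eq_iff)

lemma smul_left_cancel: "c \<noteq> 0 \<Longrightarrow> smul c A = smul c B \<Longrightarrow> A = B"
  by (simp add: vec_eq_iff)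

lemma smul_right_cancel:
  assumes "smul c M = smul d M" and "M \<noteq> 0"
  shows "c = d"
proof -
  obtain p q where "M $ p $ q \<noteq> 0" using assms(2) by (metis vec_eq_iff zero_index)
  moreover have "c * M $ p $ q = d * M $ p $ q" using assms(1) by (metis smul_nth)
  ultimately show ?thesis by simp
qed

lemma smul_sum: "smul c (\<Sum>i\<in>I. M i) = (\<Sum>i\<in>I. smul c (M i))"
  by (simp add: vec_eq_iff sum_distrib_left)

lemma scaleR_eq_smul: "r *\<^sub>R M = smul (of_real r) M"
  by (simp add: vec_eq_iff) (simp add: scaleR_conv_of_real)

lemma smul_mat: "smul c (mat d) = mat (c * d)"
  by (simp add: vec_eq_iff mat_def)

lemma mat_mult_eq_smul: "mat c ** M = smul c M"
  by (simp add: vec_eq_iff matrix_matrix_mult_def mat_def if_distrib if_distribR sum.delta cong: if_cong)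

lemma matrix_mult_mat_eq_smul: "M ** mat c = smul c M"
  by (simp add: vec_eq_iff matrix_matrix_mult_def mat_def if_distrib if_distribR sum.delta' mult.commute
      cong: if_cong)

lemma smul_matrix_mult: "smul c A ** B = smul c (A ** B)"
  by (simp add: vec_eq_iff matrix_matrix_mult_def sum_distrib_left mult.assoc)

lemma matrix_mult_smul: "A ** smul c B = smul c (A ** B)"
  by (simp add: vec_eq_iff matrix_matrix_mult_def sum_distrib_left mult_ac)

lemma matrix_add_rdistrib: "(A + B) ** C = A ** C + B ** (C :: 'a::semiring_1^'p^'n)"
  by (simp add: vec_eq_iff matrix_matrix_mult_def distrib_right sum.distrib)

lemma sum_matrix_mult_distrib: "(\<Sum>i\<in>I. M i) ** (B :: 'a::semiring_1^'p^'n) = (\<Sum>i\<in>I. M i ** B)"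
  unfolding vec_eq_iff matrix_matrix_mult_def by (simp add: sum_distrib_right sum.swap[of _ I])

lemma matrix_mult_sum_distrib: "(B :: 'a::semiring_1^'n^'m) ** (\<Sum>i\<in>I. M i) = (\<Sum>i\<in>I. B ** M i)"
  unfolding vec_eq_iff matrix_matrix_mult_def by (simp add: sum_distrib_left sum.swap[of _ I])

lemma det_scalar_mat: "det (mat c :: 'a::comm_ring_1^'n^'n) = c ^ CARD('n)"
  by (simp add: det_diagonal mat_def)

lemma det_smul: "det (smul c M) = c ^ CARD('n) * det (M :: complex^'n^'n)"
  using det_mul[of "mat c" M] by (simp add: mat_mult_eq_smul det_scalar_mat)

lemma mat_mult_vector: "mat c *v v = c *s (v :: 'a::semiring_1^'n)"
  by (simp add: vec_eq_iff matrix_vector_mult_def mat_def if_distrib if_distribR sum.delta cong: if_cong)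

lemma matrix_vector_mult_scale: "M *v (c *s v) = c *s (M *v (v :: 'a::comm_semiring_1^'n))"
  by (simp add: vec_eq_iff matrix_vector_mult_def sum_distrib_left mult_ac)

lemma elementary_matrix_mult:
  fixes a B :: "'a::semiring_1^'n^'n"
  shows "(a ** (\<chi> r s. if r = i \<and> s = j then 1 else 0) ** B) $ p $ q = a$p$i * B$j$q"
proof -
  have "a ** (\<chi> r s. if r = i \<and> s = j then 1 else 0) = (\<chi> r s. if s = j then a$r$i else 0)"
    by (simp add: vec_eq_iff matrix_matrix_mult_def if_distrib if_distribR sum.delta' cong: if_cong)
  then show ?thesis
    by (simp add: matrix_matrix_mult_def if_distrib if_distribR sum.delta cong: if_cong)
qed

lemma xi_power: "xi TYPE('n::finite) ^ k = cis (2 * pi * real k / real CARD('n))"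
proof -
  have "xi TYPE('n) ^ k = cis (real k * (2 * pi / real CARD('n)))"
    unfolding xi_def by (rule Complex.DeMoivre)
  then show ?thesis by (simp add: mult.commute)
qed

lemma xi_nonzero [simp]: "xi TYPE('n::finite) \<noteq> 0"
  by (simp add: xi_def)

lemma xi_power_card: "(xi TYPE('n::finite) ^ k) ^ CARD('n) = 1"
proof -
  have "(xi TYPE('n) ^ k) ^ CARD('n) = cis (real CARD('n) * (2 * pi * real k / real CARD('n)))"
    unfolding xi_power by (rule Complex.DeMoivre)
  also have "\<dots> = 1"
    by simp
  finally show ?thesis .
qed

lemma xi_power_inverse: "xi TYPE('n::finite) ^ k * xi TYPE('n) ^ (k * (CARD('n) - 1)) = 1"
proof -
  have "xi TYPE('n) ^ k * xi TYPE('n) ^ (k * (CARD('n) - 1)) = (xi TYPE('n) ^ k) ^ CARD('n)"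
    by (metis One_nat_def Suc_pred finite_UNIV_card_ge_0 finite mult.commute power_Suc power_mult)
  then show ?thesis by (simp add: xi_power_card)
qed

lemma root_of_unity_eq_xi_power:
  assumes "(c::complex) ^ CARD('n::finite) = 1"
  obtains k where "c = xi TYPE('n) ^ k"
proof -
  obtain k where "c = cis (2 * pi * real k / real CARD('n))"
  proof -
    have "c \<in> {z. z ^ CARD('n) = 1}" using assms by simp
    then show ?thesis
      using Complex.bij_betw_roots_unity[of "CARD('n)"] that by (auto simp: bij_betw_def)
  qed
  then show thesis using that by (metis xi_power)
qed

lemma complex_nth_root_exists:
  assumes "(w::complex) \<noteq> 0" and "n > 0"
  obtains c where "c ^ n = w"
proof -
  have "1 \<in> {z::complex. z ^ n = 1}" by simp
  then show thesis
    using bij_betw_imp_surj_on[OF bij_betw_nth_root_unity[OF assms]] that by blast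
qed

lemma matrix_inv_right: "invertible a \<Longrightarrow> a ** matrix_inv a = mat 1"
  and matrix_inv_left: "invertible a \<Longrightarrow> matrix_inv a ** a = mat 1"
  unfolding invertible_def matrix_inv_def by (metis (mono_tags, lifting) someI_ex)+

lemma matrix_inv_unique:
  fixes a b :: "'a::field^'n^'n"
  assumes "a ** b = mat 1"
  shows "matrix_inv a = b"
proof -
  have inv: "invertible a" using assms invertible_right_inverse by blast
  have "matrix_inv a = matrix_inv a ** (a ** b)" using assms by simp
  also have "\<dots> = b" by (simp add: matrix_mul_assoc matrix_inv_left[OF inv])
  finally show ?thesis .
qed

lemma matrix_inv_mult:
  fixes a b :: "'a::field^'n^'n"
  assumes "invertible a" and "invertible b"
  shows "matrix_inv (a ** b) = matrix_inv b ** matrix_inv a"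
  by (rule matrix_inv_unique)
    (metis assms matrix_inv_right matrix_mul_assoc matrix_mul_rid)

lemma matrix_inv_smul:
  assumes "invertible a" and "c \<noteq> 0"
  shows "matrix_inv (smul c a) = smul (inverse c) (matrix_inv a)"
  by (rule matrix_inv_unique)
    (simp add: assms smul_matrix_mult matrix_mult_smul matrix_inv_right smul_mat)

lemma SL_invertible: "a \<in> SL \<Longrightarrow> invertible a"
  by (simp add: SL_def invertible_det_nz)

lemma SL_mult: "a \<in> SL \<Longrightarrow> b \<in> SL \<Longrightarrow> a ** b \<in> SL"
  by (simp add: SL_def det_mul)

lemma SL_matrix_inv:
  assumes "a \<in> SL"
  shows "matrix_inv a \<in> SL"
proof -
  have "det a * det (matrix_inv a) = 1"
    using matrix_inv_right[OF SL_invertible[OF assms]] by (simp flip: det_mul)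
  with assms show ?thesis by (simp add: SL_def)
qed

lemma SL_one: "mat 1 \<in> SL"
  by (simp add: SL_def)

lemma SL_nonzero: "a \<in> SL \<Longrightarrow> a \<noteq> 0"
  by (auto simp: SL_def simp flip: mat_0)

lemma mem_pi_n: "b \<in> pi_n a \<longleftrightarrow> (\<exists>k. b = smul (xi TYPE('n) ^ k) (a::complex^'n^'n))"
  by (simp add: pi_n_def mat_mult_eq_smul)

lemma pi_n_eq_iff: "pi_n a = pi_n b \<longleftrightarrow> (\<exists>k. b = smul (xi TYPE('n) ^ k) (a::complex^'n^'n))"
proof
  assume "pi_n a = pi_n b"
  moreover have "b \<in> pi_n b" unfolding mem_pi_n by (metis power_0 smul_one)
  ultimately have "b \<in> pi_n a" by simp
  then show "\<exists>k. b = smul (xi TYPE('n) ^ k) a" by (simp add: mem_pi_n)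
next
  assume "\<exists>k. b = smul (xi TYPE('n) ^ k) a"
  then obtain k where k: "b = smul (xi TYPE('n) ^ k) a" by blast
  have "smul (xi TYPE('n) ^ j) a = smul (xi TYPE('n) ^ (j + k * (CARD('n) - 1))) b" for j
    using xi_power_inverse[where 'n='n, of k] by (simp add: k power_add mult_ac)
  moreover have "smul (xi TYPE('n) ^ j) b = smul (xi TYPE('n) ^ (j + k)) a" for j
    by (simp add: k power_add mult_ac)
  ultimately show "pi_n a = pi_n b"
    unfolding set_eq_iff mem_pi_n by metis
qed

lemma psl_mult_pi_n: "psl_mult (pi_n a) (pi_n b) = pi_n (a ** (b::complex^'n^'n))"
proof (rule set_eqI)
  fix x
  have "(\<exists>j k. x = smul (xi TYPE('n) ^ j) a ** smul (xi TYPE('n) ^ k) b) \<longleftrightarrow>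
      (\<exists>k. x = smul (xi TYPE('n) ^ k) (a ** b))"
    by (metis (no_types) smul_matrix_mult matrix_mult_smul smul_smul power_add power_0 smul_one)
  then show "x \<in> psl_mult (pi_n a) (pi_n b) \<longleftrightarrow> x \<in> pi_n (a ** b)"
    by (auto simp: psl_mult_def mem_pi_n)
qed

lemma psl_inv_pi_n:
  assumes "invertible (a::complex^'n^'n)"
  shows "psl_inv (pi_n a) = pi_n (matrix_inv a)"
proof -
  have inverse_xi: "inverse (xi TYPE('n) ^ k) = xi TYPE('n) ^ (k * (CARD('n) - 1))" for k
    using xi_power_inverse[where 'n='n, of k] by (metis inverse_unique)
  have inv_xi: "matrix_inv (smul (xi TYPE('n) ^ k) a) = smul (xi TYPE('n) ^ (k * (CARD('n) - 1))) (matrix_inv a)"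
    for k using matrix_inv_smul[OF assms, of "xi TYPE('n) ^ k"] inverse_xi[of k] by simp
  show ?thesis
  proof (rule set_eqI)
    fix x
    show "x \<in> psl_inv (pi_n a) \<longleftrightarrow> x \<in> pi_n (matrix_inv a)"
    proof
      assume "x \<in> psl_inv (pi_n a)"
      then obtain k where "x = matrix_inv (smul (xi TYPE('n) ^ k) a)"
        by (auto simp: psl_inv_def mem_pi_n)
      then show "x \<in> pi_n (matrix_inv a)"
        unfolding inv_xi mem_pi_n by blast
    next
      assume "x \<in> pi_n (matrix_inv a)"
      then obtain k where k: "x = smul (xi TYPE('n) ^ k) (matrix_inv a)"
        by (auto simp: mem_pi_n)
      have "inverse (xi TYPE('n) ^ (k * (CARD('n) - 1))) = xi TYPE('n) ^ k"
        using xi_power_inverse[where 'n='n, of k] by (metis inverse_unique mult.commute)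
      then have "x = matrix_inv (smul (xi TYPE('n) ^ (k * (CARD('n) - 1))) a)"
        using assms by (simp add: matrix_inv_smul k)
      then show "x \<in> psl_inv (pi_n a)"
        unfolding psl_inv_def by (metis image_eqI mem_pi_n)
    qed
  qed
qed

lemma pi_n_commute_iff:
  "psl_mult (pi_n a) (pi_n b) = psl_mult (pi_n b) (pi_n a) \<longleftrightarrow>
     (\<exists>k. b ** a = smul (xi TYPE('n) ^ k) (a ** (b::complex^'n^'n)))"
  by (simp add: psl_mult_pi_n pi_n_eq_iff)

lemma pi_n_in_psl_centralizer_iff:
  assumes "S \<subseteq> PSL" and "x \<in> SL"
  shows "pi_n x \<in> psl_centralizer S \<longleftrightarrow> (\<forall>s\<in>SL. pi_n s \<in> S \<longrightarrow> pi_n (x ** s) = pi_n (s ** x))"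
  using assms by (auto simp: psl_centralizer_def PSL_def psl_mult_pi_n)

lemma psl_subgroup_psl_centralizer:
  fixes S :: "((complex^'n^'n) set) set"
  assumes S: "S \<subseteq> PSL"
  shows "psl_subgroup (psl_centralizer S)"
  unfolding psl_subgroup_def
proof (intro conjI ballI)
  show "psl_centralizer S \<subseteq> PSL"
    by (auto simp: psl_centralizer_def)
  show "pi_n (mat 1) \<in> psl_centralizer S"
    using S by (simp add: pi_n_in_psl_centralizer_iff SL_one)
next
  fix X Y assume X: "X \<in> psl_centralizer S" and Y: "Y \<in> psl_centralizer S"
  obtain x y where x: "x \<in> SL" "X = pi_n x" and y: "y \<in> SL" "Y = pi_n y"
    using X Y by (auto simp: psl_centralizer_def PSL_def)
  have "pi_n (x ** y ** s) = pi_n (s ** (x ** y))" if s: "s \<in> SL" "pi_n s \<in> S" for s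
  proof -
    have cx: "pi_n (x ** s) = pi_n (s ** x)" and cy: "pi_n (y ** s) = pi_n (s ** y)"
      using X Y x y s S by (auto simp: pi_n_in_psl_centralizer_iff)
    have "pi_n (x ** y ** s) = psl_mult (pi_n x) (pi_n (y ** s))"
      by (simp add: psl_mult_pi_n matrix_mul_assoc)
    also have "\<dots> = psl_mult (pi_n (x ** s)) (pi_n y)"
      by (simp add: cy psl_mult_pi_n matrix_mul_assoc)
    also have "\<dots> = pi_n (s ** (x ** y))"
      by (simp add: cx psl_mult_pi_n matrix_mul_assoc)
    finally show ?thesis .
  qed
  then show "psl_mult X Y \<in> psl_centralizer S"
    using S x y by (simp add: psl_mult_pi_n pi_n_in_psl_centralizer_iff SL_mult)
next
  fix X assume X: "X \<in> psl_centralizer S"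
  obtain x where x: "x \<in> SL" "X = pi_n x"
    using X by (auto simp: psl_centralizer_def PSL_def)
  have xinv: "x ** matrix_inv x = mat 1" "matrix_inv x ** x = mat 1"
    using matrix_inv_right matrix_inv_left SL_invertible[OF x(1)] by auto
  have "pi_n (matrix_inv x ** s) = pi_n (s ** matrix_inv x)" if s: "s \<in> SL" "pi_n s \<in> S" for s
  proof -
    have "pi_n (x ** s) = pi_n (s ** x)"
      using X x s S by (auto simp: pi_n_in_psl_centralizer_iff)
    then obtain k where k: "s ** x = smul (xi TYPE('n) ^ k) (x ** s)"
      unfolding pi_n_eq_iff by blast
    have "matrix_inv x ** s = matrix_inv x ** (s ** x) ** matrix_inv x"
      by (simp add: matrix_mul_assoc[symmetric] xinv)
    also have "\<dots> = smul (xi TYPE('n) ^ k) (s ** matrix_inv x)"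
      by (simp add: k smul_matrix_mult matrix_mult_smul matrix_mul_assoc xinv)
    finally show ?thesis
      using pi_n_eq_iff[of "s ** matrix_inv x" "matrix_inv x ** s"] by auto
  qed
  then show "psl_inv X \<in> psl_centralizer S"
    using S x by (simp add: psl_inv_pi_n SL_invertible pi_n_in_psl_centralizer_iff SL_matrix_inv)
qed

lemma psl_subset_bicentralizer: "A \<subseteq> PSL \<Longrightarrow> A \<subseteq> psl_centralizer (psl_centralizer A)"
  by (auto simp: psl_centralizer_def)

lemma irreducible_sl_mono: "irreducible_sl H \<Longrightarrow> H \<subseteq> K \<Longrightarrow> irreducible_sl K"
  unfolding irreducible_sl_def by blast

subsection \<open>Schur's lemma and commutation factors\<close>

definition charpoly :: "complex^'n^'n \<Rightarrow> complex poly" where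
  "charpoly A = (\<Sum>p\<in>{p. p permutes (UNIV::'n set)}. of_int (sign p) *
      (\<Prod>i\<in>UNIV. [: A$i$(p i), (if p i = i then -1 else 0) :]))"

lemma poly_charpoly: "poly (charpoly A) x = det (A - mat x)"
  unfolding charpoly_def det_def poly_sum
  by (intro sum.cong refl) (auto simp: poly_prod mat_def intro!: prod.cong)

lemma coeff_charpoly: "coeff (charpoly (A::complex^'n^'n)) CARD('n) = (-1) ^ CARD('n)"
proof -
  let ?q = "\<lambda>p i. [: A$i$(p i), (if p i = i then -1 else (0::complex)) :]"
  let ?P = "{p. p permutes (UNIV::'n set)}"
  have fin: "finite ?P" by (simp add: finite_permutations)
  have other: "coeff (of_int (sign p) * (\<Prod>i\<in>UNIV. ?q p i)) CARD('n) = 0"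
    if p: "p \<in> ?P" "p \<noteq> id" for p
  proof -
    obtain i0 where i0: "p i0 \<noteq> i0" using p(2) by (metis eq_id_iff)
    have "degree (\<Prod>i\<in>UNIV. ?q p i) \<le> (\<Sum>i\<in>UNIV. degree (?q p i))"
      using degree_prod_sum_le[of UNIV "?q p"] by (simp add: o_def)
    also have "\<dots> = degree (?q p i0) + (\<Sum>i\<in>UNIV - {i0}. degree (?q p i))"
      by (simp add: sum.remove)
    also have "\<dots> \<le> 0 + (\<Sum>i\<in>UNIV - {i0}. 1)"
      using i0 by (intro add_mono sum_mono) auto
    also have "\<dots> < CARD('n)" by (simp add: card_Diff_singleton)
    finally have "degree (\<Prod>i\<in>UNIV. ?q p i) < CARD('n)" .
    then have "degree (of_int (sign p) * (\<Prod>i\<in>UNIV. ?q p i)) < CARD('n)"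
      by (metis (no_types, lifting) degree_mult_le degree_of_int add_0 order.strict_trans1)
    then show ?thesis by (simp add: coeff_eq_0)
  qed
  have idterm: "coeff (of_int (sign (id::'n\<Rightarrow>'n)) * (\<Prod>i\<in>UNIV. ?q id i)) CARD('n) = (-1) ^ CARD('n)"
  proof -
    have nz: "\<forall>i\<in>UNIV. ?q id i \<noteq> 0" by simp
    have "degree (\<Prod>i\<in>UNIV. ?q id i) = CARD('n)"
      using degree_prod_eq_sum_degree[OF nz] by simp
    moreover have "lead_coeff (\<Prod>i\<in>UNIV. ?q id i) = (-1) ^ CARD('n)"
      by (simp add: lead_coeff_prod)
    ultimately show ?thesis by (simp add: sign_id)
  qed
  have "coeff (charpoly A) CARD('n) = (\<Sum>p\<in>?P. coeff (of_int (sign p) * (\<Prod>i\<in>UNIV. ?q p i)) CARD('n))"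
    unfolding charpoly_def coeff_sum ..
  also have "\<dots> = coeff (of_int (sign (id::'n\<Rightarrow>'n)) * (\<Prod>i\<in>UNIV. ?q id i)) CARD('n)"
  proof -
    have idP: "id \<in> ?P" by (simp add: permutes_id)
    show ?thesis
      using fin other idP by (simp add: sum.remove[OF fin idP] sum.neutral)
  qed
  finally show ?thesis using idterm by simp
qed

lemma eigenvector_exists:
  fixes A :: "complex^'n^'n"
  shows "\<exists>z v. v \<noteq> 0 \<and> A *v v = z *s v"
proof -
  have "coeff (charpoly A) CARD('n) \<noteq> 0" by (simp add: coeff_charpoly)
  moreover have "CARD('n) > 0" by simp
  ultimately have "degree (charpoly A) \<noteq> 0" using le_degree[of "charpoly A" "CARD('n)"] by linarith
  then have "\<not> constant (poly (charpoly A))" by (simp add: constant_degree)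
  then obtain z where "poly (charpoly A) z = 0" using fundamental_theorem_of_algebra by blast
  then have "det (A - mat z) = 0" by (simp add: poly_charpoly)
  then have "\<not> (\<exists>B. B ** (A - mat z) = mat 1)"
    using invertible_det_nz invertible_left_inverse by blast
  then obtain v where v: "(A - mat z) *v v = 0" "v \<noteq> 0"
    using matrix_left_invertible_ker by blast
  with v show ?thesis by (metis eq_iff_diff_eq_0 matrix_vector_mult_diff_rdistrib mat_mult_vector)
qed

lemma schur_lemma:
  fixes x :: "complex^'n^'n"
  assumes irr: "irreducible_sl H" and comm: "\<And>h. h \<in> H \<Longrightarrow> x ** h = h ** x"
  shows "\<exists>c. x = mat c"
proof -
  obtain z v where v: "v \<noteq> 0" "x *v v = z *s v" using eigenvector_exists by blast
  define W where "W = {w. x *v w = z *s w}"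
  have sub: "vec.subspace W"
    unfolding vec.subspace_def W_def
    by (auto simp: matrix_vector_right_distrib matrix_vector_mult_scale vector_space_over_itself.scale_left_commute
        algebra_simps)
  have nz: "W \<noteq> {0}" using v W_def by auto
  have inv: "\<forall>h\<in>H. (\<lambda>w. h *v w) ` W \<subseteq> W"
  proof (intro ballI subsetI)
    fix h y assume h: "h \<in> H" and "y \<in> (\<lambda>w. h *v w) ` W"
    then obtain w where w: "w \<in> W" "y = h *v w" by blast
    have "x *v y = (x ** h) *v w" by (simp add: w matrix_vector_mul_assoc)
    also have "\<dots> = (h ** x) *v w" using comm h by simp
    also have "\<dots> = z *s y" using w by (simp add: W_def matrix_vector_mul_assoc[symmetric] matrix_vector_mult_scale)
    finally show "y \<in> W" by (simp add: W_def)
  qed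
  have "W = UNIV" using irr sub nz inv unfolding irreducible_sl_def by blast
  then have "\<forall>w. x *v w = mat z *v w" by (auto simp: W_def mat_mult_vector)
  then show ?thesis using matrix_eq by blast
qed

definition has_comm_factor ::
    "(complex^'n^'n) set \<Rightarrow> complex^'n^'n \<Rightarrow> (complex^'n^'n \<Rightarrow> complex) \<Rightarrow> bool" where
  "has_comm_factor H x \<gamma> \<longleftrightarrow> (\<forall>h\<in>H. x ** h = smul (\<gamma> h) (h ** x))"

definition comm_factor :: "complex^'n^'n \<Rightarrow> complex^'n^'n \<Rightarrow> complex" where
  "comm_factor x h = (SOME c. x ** h = smul c (h ** x))"

lemma comm_factor_eq:
  assumes "x \<in> SL" "h \<in> SL" "x ** h = smul c (h ** x)"
  shows "comm_factor x h = c"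
proof -
  have "x ** h = smul (comm_factor x h) (h ** x)"
    unfolding comm_factor_def using assms(3) by (rule someI)
  with assms show ?thesis
    by (metis SL_mult SL_nonzero smul_right_cancel)
qed

lemma has_comm_factor_comm_factor:
  assumes x: "x \<in> SL" and H: "H \<subseteq> SL"
    and comm: "\<forall>h\<in>H. psl_mult (pi_n h) (pi_n x) = psl_mult (pi_n x) (pi_n h)"
  shows "has_comm_factor H x (comm_factor x)" and "\<forall>h\<in>H. comm_factor x h \<noteq> 0"
proof -
  have "\<exists>c. x ** h = smul c (h ** x)" if "h \<in> H" for h
    using comm that by (simp only: pi_n_commute_iff) blast
  moreover have eq: "comm_factor x h = c" if "h \<in> H" "x ** h = smul c (h ** x)" for h c
    using comm_factor_eq x H that by blast
  ultimately show "has_comm_factor H x (comm_factor x)"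
    unfolding has_comm_factor_def by fastforce
  show "\<forall>h\<in>H. comm_factor x h \<noteq> 0"
    using x H eq \<open>\<And>h. h \<in> H \<Longrightarrow> \<exists>c. x ** h = smul c (h ** x)\<close>
    by (metis SL_mult SL_nonzero smul_eq_0_iff subsetD)
qed

lemma has_comm_factor_mult:
  assumes "has_comm_factor H x \<alpha>" "has_comm_factor H y \<beta>"
  shows "has_comm_factor H (x ** y) (\<lambda>h. \<alpha> h * \<beta> h)"
  unfolding has_comm_factor_def
proof
  fix h assume h: "h \<in> H"
  have "x ** y ** h = x ** (y ** h)"
    by (simp add: matrix_mul_assoc)
  also have "\<dots> = smul (\<beta> h) ((x ** h) ** y)"
    using assms(2) h by (simp add: has_comm_factor_def matrix_mult_smul matrix_mul_assoc)
  also have "\<dots> = smul (\<alpha> h * \<beta> h) (h ** (x ** y))"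
    using assms(1) h by (simp add: has_comm_factor_def smul_matrix_mult matrix_mul_assoc mult.commute)
  finally show "x ** y ** h = smul (\<alpha> h * \<beta> h) (h ** (x ** y))" .
qed

lemma has_comm_factor_matrix_inv:
  assumes x: "invertible x" and "has_comm_factor H x \<alpha>" "\<forall>h\<in>H. \<alpha> h \<noteq> 0"
  shows "has_comm_factor H (matrix_inv x) (\<lambda>h. inverse (\<alpha> h))"
  unfolding has_comm_factor_def
proof
  fix h assume h: "h \<in> H"
  let ?y = "matrix_inv x"
  have "h ** ?y = ?y ** (x ** h) ** ?y"
    by (simp add: matrix_mul_assoc matrix_inv_left matrix_inv_right x)
  also have "\<dots> = smul (\<alpha> h) (?y ** h)"
    using assms(2) h
    by (simp add: has_comm_factor_def smul_matrix_mult matrix_mult_smul matrix_mul_assoc[symmetric]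
        matrix_inv_left matrix_inv_right x)
  finally show "?y ** h = smul (inverse (\<alpha> h)) (h ** ?y)"
    using assms(3) h by simp
qed

lemma same_comm_factor_imp_xi_multiple:
  fixes x y :: "complex^'n^'n"
  assumes irr: "irreducible_sl H" and x: "x \<in> SL" and y: "y \<in> SL"
    and "has_comm_factor H x \<alpha>" "has_comm_factor H y \<alpha>" "\<forall>h\<in>H. \<alpha> h \<noteq> 0"
  obtains k where "x = smul (xi TYPE('n) ^ k) y"
proof -
  let ?z = "x ** matrix_inv y"
  have "has_comm_factor H ?z (\<lambda>h. \<alpha> h * inverse (\<alpha> h))"
    using assms SL_invertible has_comm_factor_matrix_inv has_comm_factor_mult by blast
  then have "\<forall>h\<in>H. ?z ** h = h ** ?z"
    using assms(6) by (simp add: has_comm_factor_def)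
  then obtain c where c: "?z = mat c"
    using schur_lemma[OF irr] by blast
  have "?z \<in> SL"
    using x y by (simp add: SL_matrix_inv SL_mult)
  then have "det ?z = 1"
    by (simp add: SL_def)
  then have "c ^ CARD('n) = 1"
    using c by (simp add: det_scalar_mat)
  then obtain k where k: "c = xi TYPE('n) ^ k"
    using root_of_unity_eq_xi_power by blast
  have "x = ?z ** y"
    using matrix_inv_left[OF SL_invertible[OF y]] by (simp add: matrix_mul_assoc[symmetric])
  then show thesis
    using that k c by (simp add: mat_mult_eq_smul)
qed

lemma has_comm_factor_sum_shift:
  assumes h: "h \<in> H" "invertible h"
    and f: "\<forall>i\<in>I. has_comm_factor H (f i) (\<gamma> i)"
    and sum0: "(\<Sum>i\<in>I. smul (c i) (f i)) = 0"
  shows "(\<Sum>i\<in>I. smul (c i * (\<gamma> i h - e)) (f i)) = 0"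
proof -
  have "h ** (\<Sum>i\<in>I. smul (c i * \<gamma> i h) (f i)) = (\<Sum>i\<in>I. smul (c i) (f i)) ** h"
    unfolding matrix_mult_sum_distrib sum_matrix_mult_distrib
  proof (intro sum.cong refl)
    fix i assume "i \<in> I"
    then have "f i ** h = smul (\<gamma> i h) (h ** f i)"
      using f h(1) by (simp add: has_comm_factor_def)
    then show "h ** smul (c i * \<gamma> i h) (f i) = smul (c i) (f i) ** h"
      by (simp add: smul_matrix_mult matrix_mult_smul)
  qed
  then have "matrix_inv h ** (h ** (\<Sum>i\<in>I. smul (c i * \<gamma> i h) (f i))) = 0"
    using sum0 by simp
  then have "(\<Sum>i\<in>I. smul (c i * \<gamma> i h) (f i)) = 0"
    by (simp add: matrix_mul_assoc matrix_inv_left h(2))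
  moreover have "(\<Sum>i\<in>I. smul (c i * (\<gamma> i h - e)) (f i)) =
      (\<Sum>i\<in>I. smul (c i * \<gamma> i h) (f i)) - smul e (\<Sum>i\<in>I. smul (c i) (f i))"
    by (simp add: vec_eq_iff smul_sum algebra_simps sum_subtractf)
  ultimately show ?thesis
    using sum0 by simp
qed

lemma sum_same_restricted_comm_factor_eq_0:
  assumes "H \<subseteq> SL" "finite I" "\<forall>i\<in>I. has_comm_factor H (f i) (\<gamma> i)"
    and "(\<Sum>i\<in>I. smul (c i) (f i)) = 0"
  shows "(\<Sum>i\<in>{i\<in>I. restrict (\<gamma> i) H = d}. smul (c i) (f i)) = 0"
  using assms(2-)
proof (induction "card ((\<lambda>i. restrict (\<gamma> i) H) ` I)" arbitrary: I c rule: less_induct)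
  case (less I c)
  let ?r = "\<lambda>i. restrict (\<gamma> i) H"
  show ?case
  proof (cases "d \<in> ?r ` I \<and> (\<exists>i1\<in>I. ?r i1 \<noteq> d)")
    case False
    then have "{i\<in>I. ?r i = d} = {} \<or> {i\<in>I. ?r i = d} = I" by blast
    then show ?thesis using less.prems(3) by (elim disjE) (simp_all only: sum.empty)
  next
    case True
    then obtain i1 j where i1: "i1 \<in> I" "?r i1 \<noteq> d" and j: "j \<in> I" "?r j = d" by blast
    then obtain h where h: "h \<in> H" "\<gamma> i1 h \<noteq> \<gamma> j h" by (metis restrict_ext)
    \<comment> \<open>Twisting the relation by h and subtracting its multiple by \<gamma> i1 h kills the class of
      i1 and rescales the class of j by \<gamma> j h - \<gamma> i1 h \<noteq> 0.\<close>
    define c' where "c' i = c i * (\<gamma> i h - \<gamma> i1 h)" for i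
    define I' where "I' = {i\<in>I. ?r i \<noteq> ?r i1}"
    have "(\<Sum>i\<in>I. smul (c' i) (f i)) = 0"
      unfolding c'_def using h(1) assms(1) less.prems
      by (intro has_comm_factor_sum_shift) (auto intro: SL_invertible)
    moreover have "(\<Sum>i\<in>I. smul (c' i) (f i)) = (\<Sum>i\<in>I'. smul (c' i) (f i))"
    proof (rule sum.mono_neutral_right[OF less.prems(1)])
      show "I' \<subseteq> I" by (auto simp: I'_def)
      show "\<forall>i\<in>I - I'. smul (c' i) (f i) = 0"
        using h(1) by (auto simp: I'_def c'_def smul_eq_0_iff dest!: fun_cong[of _ _ h])
    qed
    ultimately have sum0: "(\<Sum>i\<in>I'. smul (c' i) (f i)) = 0"
      by simp
    have "?r i1 \<in> ?r ` I - ?r ` I'"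
      using i1 by (auto simp: I'_def)
    then have "?r ` I' \<subset> ?r ` I"
      by (auto simp: I'_def)
    then have "card (?r ` I') < card (?r ` I)"
      using less.prems(1) by (simp add: psubset_card_mono)
    moreover have "finite I'" "\<forall>i\<in>I'. has_comm_factor H (f i) (\<gamma> i)"
      using less.prems(1,2) by (auto simp: I'_def)
    ultimately have "(\<Sum>i\<in>{i\<in>I'. ?r i = d}. smul (c' i) (f i)) = 0"
      using less.hyps sum0 by blast
    moreover have "{i\<in>I'. ?r i = d} = {i\<in>I. ?r i = d}"
      using i1 by (auto simp: I'_def)
    moreover have "(\<Sum>i\<in>{i\<in>I. ?r i = d}. smul (c' i) (f i)) =
        smul (\<gamma> j h - \<gamma> i1 h) (\<Sum>i\<in>{i\<in>I. ?r i = d}. smul (c i) (f i))"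
      unfolding smul_sum using j h(1)
      by (intro sum.cong refl) (auto simp: c'_def mult.commute dest!: fun_cong[of _ _ h])
    ultimately show ?thesis
      using h(2) by (simp add: smul_eq_0_iff)
  qed
qed

lemma sum_same_comm_factor_eq_0:
  assumes "H \<subseteq> SL" "finite I" "\<forall>i\<in>I. has_comm_factor H (f i) (\<gamma> i)"
    and "(\<Sum>i\<in>I. smul (c i) (f i)) = 0"
  shows "(\<Sum>i\<in>{i\<in>I. \<forall>h\<in>H. \<gamma> i h = \<delta> h}. smul (c i) (f i)) = 0"
proof -
  have "{i\<in>I. \<forall>h\<in>H. \<gamma> i h = \<delta> h} = {i\<in>I. restrict (\<gamma> i) H = restrict \<delta> H}"
    by (auto simp: restrict_def fun_eq_iff)
  then show ?thesis
    using sum_same_restricted_comm_factor_eq_0[OF assms] by simp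
qed

lemma card_le_DIM_if_distinct_comm_factors:
  fixes T :: "(complex^'n^'n) set"
  assumes "H \<subseteq> SL" "finite T" "0 \<notin> T" "\<forall>x\<in>T. has_comm_factor H x (\<gamma> x)"
    and inj: "inj_on (\<lambda>x. restrict (\<gamma> x) H) T"
  shows "card T \<le> DIM(complex^'n^'n)"
proof -
  have "independent T"
  proof (rule real_vector.independent_if_scalars_zero[OF assms(2)])
    fix u x assume sum: "(\<Sum>x\<in>T. u x *\<^sub>R x) = 0" and x: "x \<in> T"
    have "{y\<in>T. \<forall>h\<in>H. \<gamma> y h = \<gamma> x h} = {x}"
    proof
      show "{y\<in>T. \<forall>h\<in>H. \<gamma> y h = \<gamma> x h} \<subseteq> {x}"
        using x inj by (auto simp: restrict_def fun_eq_iff inj_on_def)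
    qed (use x in auto)
    moreover have "(\<Sum>y\<in>{y\<in>T. \<forall>h\<in>H. \<gamma> y h = \<gamma> x h}. smul (of_real (u y)) y) = 0"
      using sum assms by (intro sum_same_comm_factor_eq_0) (auto simp: scaleR_eq_smul)
    ultimately show "u x = 0"
      using x assms(3) by (auto simp: smul_eq_0_iff)
  qed
  then show ?thesis
    using independent_bound by blast
qed

subsection \<open>Matrices commuting with a shifted matrix up to scalars\<close>

lemma invertible_add_mat_if_large:
  fixes m :: "complex^'n^'n"
  assumes t: "(\<Sum>i\<in>UNIV. \<Sum>j\<in>UNIV. norm (m$i$j)) < norm t"
  shows "invertible (m + mat t)"
proof (rule ccontr)
  define K where "K = (\<Sum>i\<in>UNIV. \<Sum>j\<in>UNIV. norm (m$i$j))"
  assume "\<not> invertible (m + mat t)"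
  then obtain v where v: "(m + mat t) *v v = 0" "v \<noteq> 0"
    using invertible_left_inverse matrix_left_invertible_ker by blast
  define M where "M = Max (range (\<lambda>j. norm (v$j)))"
  have "M \<in> range (\<lambda>j. norm (v$j))"
    unfolding M_def by (rule Max_in) auto
  then obtain j0 where j0: "norm (v$j0) = M"
    by auto
  have Mge: "norm (v$j) \<le> M" for j
    by (simp add: M_def)
  obtain j1 where "v$j1 \<noteq> 0"
    using v(2) by (metis vec_eq_iff zero_index)
  then have Mpos: "M > 0"
    using Mge[of j1] by (meson zero_less_norm_iff order_less_le_trans)
  have "m *v v + t *s v = 0"
    using v(1) by (simp add: matrix_vector_mult_add_rdistrib mat_mult_vector)
  then have "(m *v v)$j0 = - t * v$j0"
    by (simp add: vec_eq_iff eq_neg_iff_add_eq_0)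
  then have "norm t * M = norm (\<Sum>j\<in>UNIV. m$j0$j * v$j)"
    using j0 by (simp add: norm_mult matrix_vector_mult_def)
  also have "\<dots> \<le> (\<Sum>j\<in>UNIV. norm (m$j0$j) * M)"
    by (rule order_trans[OF norm_sum]) (auto simp: norm_mult intro!: sum_mono mult_left_mono Mge)
  also have "\<dots> \<le> K * M"
    unfolding K_def sum_distrib_right[symmetric] using Mpos
    by (intro mult_right_mono member_le_sum[of j0 UNIV "\<lambda>i. \<Sum>j\<in>UNIV. norm (m$i$j)"])
      (auto intro: sum_nonneg)
  finally have "norm t \<le> K"
    using Mpos by simp
  then show False
    using t by (simp add: K_def)
qed

lemma commute_if_twisted_commute_with_shifts:
  fixes g m :: "complex^'n^'n"
  assumes g: "invertible g" and t12: "t1 \<noteq> t2"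
    and l1: "(m + mat t1) ** g = smul l1 (g ** (m + mat t1))"
    and l2: "(m + mat t2) ** g = smul l2 (g ** (m + mat t2))"
  shows "g ** m = m ** g"
proof -
  have e1: "(m ** g)$i$j + t1 * g$i$j = l1 * ((g ** m)$i$j + t1 * g$i$j)" for i j
    using l1 by (simp add: vec_eq_iff matrix_add_rdistrib matrix_add_ldistrib mat_mult_eq_smul
        matrix_mult_mat_eq_smul)
  have e2: "(m ** g)$i$j + t2 * g$i$j = l2 * ((g ** m)$i$j + t2 * g$i$j)" for i j
    using l2 by (simp add: vec_eq_iff matrix_add_rdistrib matrix_add_ldistrib mat_mult_eq_smul
        matrix_mult_mat_eq_smul)
  have "g \<noteq> 0"
  proof
    assume "g = 0"
    then have "mat 1 = (0 :: complex^'n^'n)"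
      using matrix_inv_right[OF g] by simp
    then have "mat 1 $ i0 $ i0 = (0::complex)" for i0 :: 'n
      by simp
    then show False
      by (simp add: mat_def)
  qed
  then obtain i0 j0 where gij: "g$i0$j0 \<noteq> 0"
    by (metis vec_eq_iff zero_index)
  show ?thesis
  proof (cases "l1 = l2")
    case True
    have "(t1 - t2) * g$i0$j0 = l1 * ((t1 - t2) * g$i0$j0)"
      using arg_cong2[where f="(-)", OF e1[of i0 j0] e2[of i0 j0]] True by (simp add: algebra_simps)
    then have "l1 = 1"
      using t12 gij by simp
    then show ?thesis
      using e1 by (simp add: vec_eq_iff)
  next
    case False
    define s where "s = ((l2 - 1) * t2 - (l1 - 1) * t1) / (l1 - l2)"
    have "(l1 - l2) * (g ** m)$i$j = ((l2 - 1) * t2 - (l1 - 1) * t1) * g$i$j" for i j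
      using arg_cong2[where f="(-)", OF e1[of i j] e2[of i j]] by (simp add: algebra_simps)
    then have "g ** m = smul s g"
      using False by (simp add: vec_eq_iff s_def field_simps)
    then have "m = mat s"
      using matrix_inv_left[OF g] matrix_mul_assoc[of "matrix_inv g" g m]
      by (simp add: matrix_mult_smul smul_mat)
    then show ?thesis
      by (simp add: mat_mult_eq_smul matrix_mult_mat_eq_smul)
  qed
qed

subsection \<open>The bicentralizer of A\<close>

locale projective_centralizer =
  fixes H :: "(complex^'n^'n) set" and A :: "((complex^'n^'n) set) set"
  assumes H_subgroup: "sl_subgroup H" and H_irreducible: "irreducible_sl H"
    and A_subgroup: "psl_subgroup A" and A_subset_Zn: "A \<subseteq> Zn H"
begin

definition A_lift :: "(complex^'n^'n) set" where
  "A_lift = {a \<in> SL. pi_n a \<in> A}"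

lemma H_subset_SL: "H \<subseteq> SL"
  using H_subgroup by (simp add: sl_subgroup_def)

lemma A_subset_PSL: "A \<subseteq> PSL"
  using A_subgroup by (simp add: psl_subgroup_def)

lemma A_lift_SL: "a \<in> A_lift \<Longrightarrow> a \<in> SL"
  by (simp add: A_lift_def)

lemma mat_1_in_A_lift: "mat 1 \<in> A_lift"
  using A_subgroup by (simp add: A_lift_def SL_one psl_subgroup_def)

lemma A_lift_mult: "a \<in> A_lift \<Longrightarrow> b \<in> A_lift \<Longrightarrow> a ** b \<in> A_lift"
  using A_subgroup by (simp add: A_lift_def SL_mult psl_subgroup_def flip: psl_mult_pi_n)

lemma A_lift_matrix_inv: "a \<in> A_lift \<Longrightarrow> matrix_inv a \<in> A_lift"
  using A_subgroup
  by (simp add: A_lift_def SL_matrix_inv SL_invertible psl_subgroup_def flip: psl_inv_pi_n)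

lemma A_lift_comm_factor:
  assumes a: "a \<in> A_lift"
  shows "has_comm_factor H a (comm_factor a)" and "\<forall>h\<in>H. comm_factor a h \<noteq> 0"
proof -
  have "pi_n a \<in> Zn H"
    using a A_subset_Zn by (auto simp: A_lift_def)
  then have "\<forall>h\<in>H. psl_mult (pi_n h) (pi_n a) = psl_mult (pi_n a) (pi_n h)"
    by (auto simp: Zn_def psl_centralizer_def)
  then show "has_comm_factor H a (comm_factor a)" and "\<forall>h\<in>H. comm_factor a h \<noteq> 0"
    using has_comm_factor_comm_factor[OF A_lift_SL[OF a] H_subset_SL] by auto
qed

lemma finite_comm_factors_A_lift: "finite ((\<lambda>a. restrict (comm_factor a) H) ` A_lift)"
proof (rule ccontr)
  define \<rho> where "\<rho> a = restrict (comm_factor a) H" for a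
  let ?r = "inv_into A_lift \<rho>"
  assume "infinite ((\<lambda>a. restrict (comm_factor a) H) ` A_lift)"
  then obtain K where K: "finite K" "card K = Suc DIM(complex^'n^'n)" "K \<subseteq> \<rho> ` A_lift"
    using infinite_arbitrarily_large unfolding \<rho>_def by blast
  have r: "?r \<kappa> \<in> A_lift" "\<rho> (?r \<kappa>) = \<kappa>" if "\<kappa> \<in> K" for \<kappa>
    using that K(3) by (auto intro: inv_into_into f_inv_into_f)
  have "card (?r ` K) \<le> DIM(complex^'n^'n)"
  proof (rule card_le_DIM_if_distinct_comm_factors[OF H_subset_SL])
    show "finite (?r ` K)" using K(1) by simp
    show "0 \<notin> ?r ` K"
      using r(1) A_lift_SL SL_nonzero by fastforce
    show "\<forall>x\<in>?r ` K. has_comm_factor H x (comm_factor x)"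
      using r(1) A_lift_comm_factor(1) by blast
    show "inj_on (\<lambda>x. restrict (comm_factor x) H) (?r ` K)"
    proof (rule inj_onI)
      fix x y assume "x \<in> ?r ` K" "y \<in> ?r ` K" "restrict (comm_factor x) H = restrict (comm_factor y) H"
      then show "x = y"
        using r(2) unfolding \<rho>_def by force
    qed
  qed
  moreover have "inj_on ?r K"
    using K(3) by (rule inj_on_inv_into)
  ultimately show False
    using K(2) by (simp add: card_image)
qed

lemma finite_A_lift: "finite A_lift"
proof -
  define \<rho> where "\<rho> a = restrict (comm_factor a) H" for a
  let ?r = "inv_into A_lift \<rho>"
  have "A_lift \<subseteq> (\<lambda>(c, b). smul c b) ` ({c. c ^ CARD('n) = 1} \<times> ?r ` \<rho> ` A_lift)"
  proof
    fix a assume a: "a \<in> A_lift"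
    let ?b = "?r (\<rho> a)"
    have b: "?b \<in> A_lift" "\<rho> ?b = \<rho> a"
      using a by (auto intro: inv_into_into f_inv_into_f)
    have "comm_factor ?b h = comm_factor a h" if "h \<in> H" for h
      using fun_cong[OF b(2), of h] that by (simp add: \<rho>_def)
    then have "has_comm_factor H ?b (comm_factor a)"
      using A_lift_comm_factor(1)[OF b(1)] by (simp add: has_comm_factor_def)
    then obtain k where "a = smul (xi TYPE('n) ^ k) ?b"
      using same_comm_factor_imp_xi_multiple[OF H_irreducible A_lift_SL[OF a] A_lift_SL[OF b(1)]]
        A_lift_comm_factor[OF a] by blast
    moreover have "(xi TYPE('n) ^ k, ?b) \<in> {c. c ^ CARD('n) = 1} \<times> ?r ` \<rho> ` A_lift"
      using a by (auto simp: xi_power_card)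
    ultimately show "a \<in> (\<lambda>(c, b). smul c b) ` ({c. c ^ CARD('n) = 1} \<times> ?r ` \<rho> ` A_lift)"
      by force
  qed
  moreover have "finite {c::complex. c ^ CARD('n) = 1}"
    by (intro finite_roots_unity) simp
  ultimately show ?thesis
    using finite_comm_factors_A_lift unfolding \<rho>_def by (meson finite_SigmaI finite_imageI finite_subset)
qed

abbreviation ZA :: "((complex^'n^'n) set) set" where
  "ZA \<equiv> psl_centralizer A"

lemma pi_n_in_ZA_iff:
  assumes "x \<in> SL"
  shows "pi_n x \<in> ZA \<longleftrightarrow> (\<forall>a\<in>A_lift. pi_n (x ** a) = pi_n (a ** x))"
  using pi_n_in_psl_centralizer_iff[OF A_subset_PSL assms] by (auto simp: A_lift_def)

lemma pi_n_H_in_ZA: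
  assumes h: "h \<in> H"
  shows "pi_n h \<in> ZA"
proof -
  have "pi_n h \<in> PSL"
    using h H_subset_SL by (auto simp: PSL_def)
  moreover have "\<forall>X\<in>A. psl_mult (pi_n h) X = psl_mult X (pi_n h)"
    using A_subset_Zn h by (auto simp: Zn_def psl_centralizer_def)
  ultimately show ?thesis
    by (simp add: psl_centralizer_def)
qed

lemma bicentralizer_comm_factor:
  assumes g: "g \<in> SL" and gZ: "pi_n g \<in> psl_centralizer ZA"
  shows "has_comm_factor H g (comm_factor g)" and "\<forall>h\<in>H. comm_factor g h \<noteq> 0"
proof -
  have "\<forall>h\<in>H. psl_mult (pi_n h) (pi_n g) = psl_mult (pi_n g) (pi_n h)"
    using gZ pi_n_H_in_ZA by (simp add: psl_centralizer_def)
  then show "has_comm_factor H g (comm_factor g)" and "\<forall>h\<in>H. comm_factor g h \<noteq> 0"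
    using has_comm_factor_comm_factor[OF g H_subset_SL] by auto
qed

lemma bicentralizer_twisted_commute_with_shift:
  assumes g: "g \<in> SL" and gZ: "pi_n g \<in> psl_centralizer ZA"
    and m: "\<forall>a\<in>A_lift. m ** a = a ** m" and t: "invertible (m + mat t)"
  obtains l where "(m + mat t) ** g = smul l (g ** (m + mat t))"
proof -
  let ?x = "m + mat t"
  have det: "det ?x \<noteq> 0"
    using t invertible_det_nz by blast
  obtain c where c: "c ^ CARD('n) = inverse (det ?x)"
    using complex_nth_root_exists[of "inverse (det ?x)" "CARD('n)"] det by auto
  then have c0: "c \<noteq> 0"
    using det by (auto simp: zero_power)
  let ?u = "smul c ?x"
  have "?u \<in> SL"
    using c det by (simp add: SL_def det_smul)
  moreover have "?u ** a = a ** ?u" if "a \<in> A_lift" for a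
    using m that
    by (simp add: matrix_add_rdistrib matrix_add_ldistrib mat_mult_eq_smul matrix_mult_mat_eq_smul
        smul_matrix_mult matrix_mult_smul)
  ultimately have "pi_n ?u \<in> ZA"
    by (simp add: pi_n_in_ZA_iff)
  then have "psl_mult (pi_n g) (pi_n ?u) = psl_mult (pi_n ?u) (pi_n g)"
    using gZ by (simp add: psl_centralizer_def)
  then obtain k where "?u ** g = smul (xi TYPE('n) ^ k) (g ** ?u)"
    unfolding pi_n_commute_iff by blast
  then have "smul c (?x ** g) = smul c (smul (xi TYPE('n) ^ k) (g ** ?x))"
    by (simp add: smul_matrix_mult matrix_mult_smul mult.commute)
  then show thesis
    using that smul_left_cancel[OF c0] by blast
qed

lemma bicentralizer_commutes_with_commutant:
  assumes g: "g \<in> SL" and gZ: "pi_n g \<in> psl_centralizer ZA"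
    and m: "\<forall>a\<in>A_lift. m ** a = a ** m"
  shows "g ** m = m ** g"
proof -
  define K where "K = (\<Sum>i\<in>UNIV. \<Sum>j\<in>UNIV. norm (m$i$j))"
  have "K \<ge> 0"
    unfolding K_def by (intro sum_nonneg) auto
  then have "invertible (m + mat (of_real (K + 1)))" and "invertible (m + mat (of_real (K + 2)))"
    by (auto intro!: invertible_add_mat_if_large simp: K_def[symmetric])
  then obtain l1 l2
    where l1: "(m + mat (of_real (K + 1))) ** g = smul l1 (g ** (m + mat (of_real (K + 1))))"
      and l2: "(m + mat (of_real (K + 2))) ** g = smul l2 (g ** (m + mat (of_real (K + 2))))"
    using bicentralizer_twisted_commute_with_shift[OF g gZ m] by metis
  show ?thesis
    by (rule commute_if_twisted_commute_with_shifts[OF SL_invertible[OF g] _ l1 l2]) simp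
qed

lemma conjugation_sum_commutes:
  assumes b: "b \<in> A_lift"
  shows "(\<Sum>a\<in>A_lift. a ** y ** matrix_inv a) ** b = b ** (\<Sum>a\<in>A_lift. a ** y ** matrix_inv a)"
proof -
  let ?m = "\<Sum>a\<in>A_lift. a ** y ** matrix_inv a"
  have binv: "b ** matrix_inv b = mat 1" "matrix_inv b ** b = mat 1"
    using matrix_inv_right matrix_inv_left SL_invertible[OF A_lift_SL[OF b]] by auto
  have "bij_betw (\<lambda>a. b ** a) A_lift A_lift"
  proof (rule bij_betwI[where g="\<lambda>a. matrix_inv b ** a"])
    show "(\<lambda>a. b ** a) \<in> A_lift \<rightarrow> A_lift" "(\<lambda>a. matrix_inv b ** a) \<in> A_lift \<rightarrow> A_lift"
      using b A_lift_mult A_lift_matrix_inv by auto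
  qed (simp_all add: matrix_mul_assoc binv)
  then have "?m = (\<Sum>a\<in>A_lift. (b ** a) ** y ** matrix_inv (b ** a))"
    by (rule sum.reindex_bij_betw[symmetric])
  also have "\<dots> = b ** ?m ** matrix_inv b"
    unfolding matrix_mult_sum_distrib sum_matrix_mult_distrib
  proof (rule sum.cong[OF refl])
    fix a assume "a \<in> A_lift"
    then have "matrix_inv (b ** a) = matrix_inv a ** matrix_inv b"
      using b A_lift_SL SL_invertible matrix_inv_mult by blast
    then show "b ** a ** y ** matrix_inv (b ** a) = b ** (a ** y ** matrix_inv a) ** matrix_inv b"
      by (simp add: matrix_mul_assoc)
  qed
  finally have "?m ** b = b ** ?m ** matrix_inv b ** b"
    by simp
  then show ?thesis
    by (simp add: matrix_mul_assoc[symmetric] binv)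
qed

lemma bicentralizer_averaging_identity:
  assumes g: "g \<in> SL" and gZ: "pi_n g \<in> psl_centralizer ZA"
  shows "(\<Sum>a\<in>A_lift. smul (a$i$i) (matrix_inv a ** g)) =
    (\<Sum>a\<in>A_lift. smul ((g ** a)$i$i) (matrix_inv a))"
proof -
  have "(\<Sum>a\<in>A_lift. smul (a$i$i) (matrix_inv a ** g)) $ j $ q =
      (\<Sum>a\<in>A_lift. smul ((g ** a)$i$i) (matrix_inv a)) $ j $ q" for j q
  proof -
    define E where "E = ((\<chi> r s. if r = i \<and> s = j then 1 else 0) :: complex^'n^'n)"
    define m where "m = (\<Sum>a\<in>A_lift. a ** E ** matrix_inv a)"
    have "g ** m = m ** g"
      unfolding m_def using g gZ conjugation_sum_commutes
      by (intro bicentralizer_commutes_with_commutant) auto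
    moreover have "(m ** g) $ i $ q = (\<Sum>a\<in>A_lift. smul (a$i$i) (matrix_inv a ** g)) $ j $ q"
      unfolding m_def sum_matrix_mult_distrib sum_component
    proof (intro sum.cong refl)
      fix a
      have "a ** E ** matrix_inv a ** g = a ** E ** (matrix_inv a ** g)"
        by (simp only: matrix_mul_assoc)
      then show "(a ** E ** matrix_inv a ** g) $ i $ q = smul (a$i$i) (matrix_inv a ** g) $ j $ q"
        unfolding E_def by (simp add: elementary_matrix_mult)
    qed
    moreover have "(g ** m) $ i $ q = (\<Sum>a\<in>A_lift. smul ((g ** a)$i$i) (matrix_inv a)) $ j $ q"
      unfolding m_def matrix_mult_sum_distrib sum_component E_def
      by (intro sum.cong refl) (simp add: matrix_mul_assoc elementary_matrix_mult)
    ultimately show ?thesis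
      by simp
  qed
  then show ?thesis
    by (simp add: vec_eq_iff)
qed

lemma A_lift_trivial_factor_term:
  assumes a: "a \<in> A_lift" and triv: "\<forall>h\<in>H. comm_factor a h = 1"
  shows "smul (a$i$i) (matrix_inv a ** g) = g"
proof -
  have "\<forall>h\<in>H. a ** h = h ** a"
    using A_lift_comm_factor(1)[OF a] triv by (simp add: has_comm_factor_def)
  then obtain d where d: "a = mat d"
    using schur_lemma[OF H_irreducible] by blast
  have "d ^ CARD('n) = 1"
    using A_lift_SL[OF a] d by (simp add: SL_def det_scalar_mat)
  then have d0: "d \<noteq> 0"
    by (auto simp: zero_power)
  have "matrix_inv a = mat (inverse d)"
    unfolding d by (rule matrix_inv_unique) (simp add: mat_mult_eq_smul smul_mat d0)
  moreover have "mat d $ i $ i = d"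
    by (simp add: mat_def)
  ultimately show ?thesis
    using d0 by (simp add: d mat_mult_eq_smul)
qed

lemma pi_n_in_A_if_comm_factor_of_inverse:
  assumes g: "g \<in> SL" "has_comm_factor H g \<gamma>" "\<forall>h\<in>H. \<gamma> h \<noteq> 0"
    and a: "a \<in> A_lift" and inv: "\<forall>h\<in>H. inverse (comm_factor a h) = \<gamma> h"
  shows "pi_n g \<in> A"
proof -
  have "has_comm_factor H (matrix_inv a) \<gamma>"
    using has_comm_factor_matrix_inv[OF SL_invertible[OF A_lift_SL[OF a]] A_lift_comm_factor[OF a]] inv
    by (simp add: has_comm_factor_def)
  then obtain k where "g = smul (xi TYPE('n) ^ k) (matrix_inv a)"
    using same_comm_factor_imp_xi_multiple[OF H_irreducible g(1) SL_matrix_inv[OF A_lift_SL[OF a]]] g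
    by blast
  then have "pi_n (matrix_inv a) = pi_n g"
    unfolding pi_n_eq_iff by blast
  then show ?thesis
    using A_lift_matrix_inv[OF a] by (simp add: A_lift_def)
qed

lemma bicentralizer_linear_relation:
  fixes i :: 'n
  assumes g: "g \<in> SL" and gZ: "pi_n g \<in> psl_centralizer ZA"
  defines "f \<equiv> \<lambda>x. case x of Inl a \<Rightarrow> matrix_inv a ** g | Inr a \<Rightarrow> matrix_inv a"
    and "c \<equiv> \<lambda>x. case x of Inl a \<Rightarrow> a$i$i | Inr a \<Rightarrow> - (g ** a)$i$i"
    and "\<gamma> \<equiv> \<lambda>x. case x of
        Inl a \<Rightarrow> (\<lambda>h. inverse (comm_factor a h) * comm_factor g h)
      | Inr a \<Rightarrow> (\<lambda>h. inverse (comm_factor a h))"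
  shows "\<forall>x\<in>A_lift <+> A_lift. has_comm_factor H (f x) (\<gamma> x)"
    and "(\<Sum>x\<in>A_lift <+> A_lift. smul (c x) (f x)) = 0"
proof -
  show "\<forall>x\<in>A_lift <+> A_lift. has_comm_factor H (f x) (\<gamma> x)"
  proof
    fix x assume "x \<in> A_lift <+> A_lift"
    then obtain a where a: "a \<in> A_lift" "x = Inl a \<or> x = Inr a"
      by auto
    have "has_comm_factor H (matrix_inv a) (\<lambda>h. inverse (comm_factor a h))"
      using has_comm_factor_matrix_inv[OF SL_invertible[OF A_lift_SL[OF a(1)]] A_lift_comm_factor[OF a(1)]] .
    then show "has_comm_factor H (f x) (\<gamma> x)"
      using a(2) has_comm_factor_mult bicentralizer_comm_factor(1)[OF g gZ]
      by (auto simp: f_def \<gamma>_def)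
  qed
  have "(\<Sum>x\<in>A_lift <+> A_lift. smul (c x) (f x)) =
      (\<Sum>a\<in>A_lift. smul (a$i$i) (matrix_inv a ** g)) + (\<Sum>a\<in>A_lift. smul (- (g ** a)$i$i) (matrix_inv a))"
    using finite_A_lift by (simp add: sum.Plus o_def f_def c_def)
  also have "(\<Sum>a\<in>A_lift. smul (- (g ** a)$i$i) (matrix_inv a)) =
      - (\<Sum>a\<in>A_lift. smul ((g ** a)$i$i) (matrix_inv a))"
    by (simp add: vec_eq_iff sum_negf)
  finally show "(\<Sum>x\<in>A_lift <+> A_lift. smul (c x) (f x)) = 0"
    using bicentralizer_averaging_identity[OF g gZ] by simp
qed

lemma card_trivial_comm_factor_A_lift: "card {a\<in>A_lift. \<forall>h\<in>H. comm_factor a h = 1} \<noteq> 0"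
proof -
  have "mat 1 \<in> {a\<in>A_lift. \<forall>h\<in>H. comm_factor a h = 1}"
    using mat_1_in_A_lift H_subset_SL comm_factor_eq[OF SL_one _, of _ 1] by auto
  then show ?thesis
    using finite_A_lift by auto
qed

lemma bicentralizer_in_A:
  assumes g: "g \<in> SL" and gZ: "pi_n g \<in> psl_centralizer ZA"
  shows "pi_n g \<in> A"
proof (rule ccontr)
  assume notA: "pi_n g \<notin> A"
  fix i :: 'n
  note gfac = bicentralizer_comm_factor[OF g gZ]
  define I where "I = A_lift <+> A_lift"
  define f :: "complex^'n^'n + complex^'n^'n \<Rightarrow> complex^'n^'n"
    where "f x = (case x of Inl a \<Rightarrow> matrix_inv a ** g | Inr a \<Rightarrow> matrix_inv a)" for x
  define c :: "complex^'n^'n + complex^'n^'n \<Rightarrow> complex"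
    where "c x = (case x of Inl a \<Rightarrow> a$i$i | Inr a \<Rightarrow> - (g ** a)$i$i)" for x
  define \<gamma> :: "complex^'n^'n + complex^'n^'n \<Rightarrow> complex^'n^'n \<Rightarrow> complex"
    where "\<gamma> x = (case x of
        Inl a \<Rightarrow> (\<lambda>h. inverse (comm_factor a h) * comm_factor g h)
      | Inr a \<Rightarrow> (\<lambda>h. inverse (comm_factor a h)))" for x
  define S where "S = {a\<in>A_lift. \<forall>h\<in>H. comm_factor a h = 1}"
  \<comment> \<open>As pi_n g is not in A, the only terms of the relation carrying the factor of g are the
    terms Inl a with a in S, each of which equals g.\<close>
  have "(\<Sum>x\<in>{x\<in>I. \<forall>h\<in>H. \<gamma> x h = comm_factor g h}. smul (c x) (f x)) = 0"
    using bicentralizer_linear_relation(1)[OF g gZ, folded f_def \<gamma>_def, folded I_def]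
      bicentralizer_linear_relation(2)[OF g gZ, of i, folded f_def c_def, folded I_def] finite_A_lift
    by (intro sum_same_comm_factor_eq_0[OF H_subset_SL]) (simp_all add: I_def)
  moreover have "{x\<in>I. \<forall>h\<in>H. \<gamma> x h = comm_factor g h} = Inl ` S"
  proof -
    have "(\<forall>h\<in>H. inverse (comm_factor a h) * comm_factor g h = comm_factor g h) \<longleftrightarrow>
        (\<forall>h\<in>H. comm_factor a h = 1)" if "a \<in> A_lift" for a
      using that gfac(2) A_lift_comm_factor(2) by (auto simp: field_simps)
    moreover have "\<not> (\<forall>h\<in>H. inverse (comm_factor a h) = comm_factor g h)" if "a \<in> A_lift" for a
      using that pi_n_in_A_if_comm_factor_of_inverse[OF g gfac] notA by blast
    ultimately show ?thesis
      by (auto simp: I_def \<gamma>_def S_def; blast)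
  qed
  moreover have "(\<Sum>x\<in>Inl ` S. smul (c x) (f x)) = real (card S) *\<^sub>R g"
    by (simp add: sum.reindex c_def f_def S_def A_lift_trivial_factor_term flip: sum_constant_scaleR)
  ultimately have "real (card S) *\<^sub>R g = 0"
    by simp
  then show False
    using card_trivial_comm_factor_A_lift SL_nonzero[OF g] by (simp add: S_def)
qed

lemma ZA_irreducible: "irreducible_psl ZA"
  unfolding irreducible_psl_def
  by (rule irreducible_sl_mono[OF H_irreducible]) (use H_subset_SL pi_n_H_in_ZA in auto)

lemma bicentralizer_eq: "psl_centralizer ZA = A"
proof
  show "psl_centralizer ZA \<subseteq> A"
    using bicentralizer_in_A by (auto simp: psl_centralizer_def PSL_def)
  show "A \<subseteq> psl_centralizer ZA"
    using A_subset_PSL by (rule psl_subset_bicentralizer)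
qed

end

theorem mainTheorem6:
  fixes H :: "(complex^'n^'n) set"
    and A :: "((complex^'n^'n) set) set"
  assumes "sl_subgroup H" and "irreducible_sl H"
    and "psl_subgroup A" and "A \<subseteq> Zn H"
  shows "psl_centralizer (psl_centralizer A) = A \<and>
         (\<exists>B. psl_subgroup B \<and> irreducible_psl B \<and> psl_centralizer B = A)"
proof -
  interpret projective_centralizer H A
    using assms by unfold_locales
  show ?thesis
    using bicentralizer_eq ZA_irreducible psl_subgroup_psl_centralizer[OF A_subset_PSL] by blast
qed

end
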